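(* Let $\mathbb{F}=\mathbb{F}^{[a,b]}_{(m,n)}(q)$ be a finite polyadic field. Then $\mathbb{F}$ has no proper subfield, i.e. there is no proper nonempty subset $S\subsetneq\mathbb{F}$ closed under $\nu_m$ and $\mu_n$ such that $S$ with the restricted operations is itself a polyadic $(m,n)$-field.
   Context: Let $b\in\mathbb{N}$, $0\le a\le b-1$, and let $m,n\ge2$ be the minimal integers with $ma\equiv a$ and $a^n\equiv a \pmod b$. For $q\in\mathbb{N}$, $\mathbb{F}^{[a,b]}_{(m,n)}(q)$ has underlying set $\{a+bk: 0\le k\le q-1\}$, with $m$-ary addition $\nu_m[x_1,\dots,x_m]$ = the element of the set congruent to $x_1+\dots+x_m$ modulo $bq$, and $n$-ary multiplication $\mu_n[x_1,\dots,x_n]$ = the element congruent to $x_1\cdots x_n$ modulo $bq$. An $(m,n)$-field is a set with a commutative $m$-ary addition and commutative $n$-ary multiplication satisfying polyadic distributivity, such that the addition makes it an $m$-ary group and the multiplication makes it (with the zero removed, if a zero $z$, i.e. an element with $\mu_n[x_1,\dots,x_{n-1},z]=z$ for all $x_i$, exists) an $n$-ary group; an $n$-ary group is a set with an associative $n$-ary operation in which every equation $\mu_n[x_1,\dots,x_{i-1},u,x_{i+1},\dots,x_n]=x_0$ has a unique solution $u$. $\mathbb{F}^{[a,b]}_{(m,n)}(q)$ is called a finite polyadic field when it is an $(m,n)$-field in this sense. *)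

theory Defs
  imports Main "HOL-Library.Multiset" "HOL-Number_Theory.Cong"
begin

text \<open>Polyadic operations are modelled as functions on lists; a k-ary operation
  is only ever applied to lists of length k with entries in the carrier.\<close>

definition closed_on :: "'a set \<Rightarrow> nat \<Rightarrow> ('a list \<Rightarrow> 'a) \<Rightarrow> bool" where
  "closed_on S k f \<longleftrightarrow> (\<forall>xs. length xs = k \<and> set xs \<subseteq> S \<longrightarrow> f xs \<in> S)"

definition commutative_on :: "'a set \<Rightarrow> nat \<Rightarrow> ('a list \<Rightarrow> 'a) \<Rightarrow> bool" where
  "commutative_on S k f \<longleftrightarrow>
     (\<forall>xs ys. length xs = k \<and> set xs \<subseteq> S \<and> mset ys = mset xs \<longrightarrow> f ys = f xs)"

definition associative_on :: "'a set \<Rightarrow> nat \<Rightarrow> ('a list \<Rightarrow> 'a) \<Rightarrow> bool" where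
  "associative_on S k f \<longleftrightarrow>
     (\<forall>xs i j. length xs = 2 * k - 1 \<and> set xs \<subseteq> S \<and> i < k \<and> j < k \<longrightarrow>
        f (take i xs @ [f (take k (drop i xs))] @ drop (i + k) xs)
        = f (take j xs @ [f (take k (drop j xs))] @ drop (j + k) xs))"

definition nary_group :: "'a set \<Rightarrow> nat \<Rightarrow> ('a list \<Rightarrow> 'a) \<Rightarrow> bool" where
  "nary_group S k f \<longleftrightarrow> S \<noteq> {} \<and> closed_on S k f \<and> associative_on S k f \<and>
     (\<forall>i xs x0. i < k \<and> length xs = k - 1 \<and> set xs \<subseteq> S \<and> x0 \<in> S \<longrightarrow>
        (\<exists>!u. u \<in> S \<and> f (take i xs @ u # drop i xs) = x0))"

definition is_zero :: "'a set \<Rightarrow> nat \<Rightarrow> ('a list \<Rightarrow> 'a) \<Rightarrow> 'a \<Rightarrow> bool" where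
  "is_zero S k f z \<longleftrightarrow> z \<in> S \<and>
     (\<forall>i xs. i < k \<and> length xs = k - 1 \<and> set xs \<subseteq> S \<longrightarrow> f (take i xs @ z # drop i xs) = z)"

definition distributive_on ::
  "'a set \<Rightarrow> nat \<Rightarrow> nat \<Rightarrow> ('a list \<Rightarrow> 'a) \<Rightarrow> ('a list \<Rightarrow> 'a) \<Rightarrow> bool" where
  "distributive_on S m n nu mu \<longleftrightarrow>
     (\<forall>i xs ys. i < n \<and> length xs = m \<and> length ys = n - 1 \<and> set xs \<subseteq> S \<and> set ys \<subseteq> S \<longrightarrow>
        mu (take i ys @ nu xs # drop i ys)
        = nu (map (\<lambda>x. mu (take i ys @ x # drop i ys)) xs))"

definition polyadic_field ::
  "'a set \<Rightarrow> nat \<Rightarrow> nat \<Rightarrow> ('a list \<Rightarrow> 'a) \<Rightarrow> ('a list \<Rightarrow> 'a) \<Rightarrow> bool" where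
  "polyadic_field S m n nu mu \<longleftrightarrow>
     2 \<le> m \<and> 2 \<le> n \<and>
     commutative_on S m nu \<and> commutative_on S n mu \<and>
     closed_on S n mu \<and> associative_on S n mu \<and>
     distributive_on S m n nu mu \<and>
     nary_group S m nu \<and>
     (if (\<exists>z. is_zero S n mu z)
      then (\<forall>z. is_zero S n mu z \<longrightarrow> nary_group (S - {z}) n mu)
      else nary_group S n mu)"

definition F_carrier :: "nat \<Rightarrow> nat \<Rightarrow> nat \<Rightarrow> nat set" where
  "F_carrier a b q = {a + b * k | k. k < q}"

definition F_red :: "nat \<Rightarrow> nat \<Rightarrow> nat \<Rightarrow> nat \<Rightarrow> nat" where
  "F_red a b q x = (THE y. y \<in> F_carrier a b q \<and> [y = x] (mod (b * q)))"

definition F_add :: "nat \<Rightarrow> nat \<Rightarrow> nat \<Rightarrow> nat list \<Rightarrow> nat" where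
  "F_add a b q xs = F_red a b q (sum_list xs)"

definition F_mult :: "nat \<Rightarrow> nat \<Rightarrow> nat \<Rightarrow> nat list \<Rightarrow> nat" where
  "F_mult a b q xs = F_red a b q (prod_list xs)"

end

theory Submission
  imports Defs
begin

text \<open>Let S be a subfield and w \<in> S a nonzero element. Adding any x \<in> S to m - 1 copies of w shows
  that S is stable under translation by (m - 1) w modulo bq, hence by G = gcd((m - 1) w, bq),
  which is a multiple of b. If G divided b, S would be stable under translation by b and thus
  equal to all of F, so G = b g with g \<ge> 2, g dividing q and w. Then multiplication by
  w^(n-1) identifies u with u + bq/g, contradicting unique solvability in the multiplicative
  group of F; since S has two elements, q \<ge> 3, which leaves room to choose both away from zero.\<close>

lemma F_carrier_iff:
  assumes "a < b"
  shows "x \<in> F_carrier a b q \<longleftrightarrow> x < b * q \<and> x mod b = a"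
proof
  assume "x \<in> F_carrier a b q"
  then obtain k where k: "k < q" "x = a + b * k" unfolding F_carrier_def by auto
  have "a + b * k < b * (k + 1)" using assms by simp
  also have "\<dots> \<le> b * q" using k by (intro mult_le_mono2) simp
  finally show "x < b * q \<and> x mod b = a" using k assms by simp
next
  assume x: "x < b * q \<and> x mod b = a"
  then have "x div b < q" by (simp add: less_mult_imp_div_less mult.commute)
  moreover have "x = a + b * (x div b)" using x by (metis div_mult_mod_eq add.commute mult.commute)
  ultimately show "x \<in> F_carrier a b q" unfolding F_carrier_def by blast
qed

lemma card_F_carrier:
  assumes "0 < b"
  shows "card (F_carrier a b q) = q"
proof -
  have "F_carrier a b q = (\<lambda>k. a + b * k) ` {..<q}" unfolding F_carrier_def by auto
  moreover have "inj_on (\<lambda>k. a + b * k) {..<q}" using assms by (auto intro: inj_onI)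
  ultimately show ?thesis by (simp add: card_image)
qed

lemma F_red_eq_mod:
  assumes "a < b" "0 < q" "x mod b = a"
  shows "F_red a b q x = x mod (b * q)"
  unfolding F_red_def
proof (rule the_equality)
  have "0 < b * q" using assms by simp
  then show "x mod (b * q) \<in> F_carrier a b q \<and> [x mod (b * q) = x] (mod (b * q))"
    using assms by (simp add: F_carrier_iff cong_def mod_mod_cancel)
next
  fix y assume "y \<in> F_carrier a b q \<and> [y = x] (mod (b * q))"
  then show "y = x mod (b * q)" using assms by (metis F_carrier_iff cong_def mod_less)
qed

lemma F_add_replicate:
  assumes "a < b" "0 < q" "1 \<le> m" "[m * a = a] (mod b)" "x mod b = a" "w mod b = a"
  shows "F_add a b q (x # replicate (m - 1) w) = (x + (m - 1) * w) mod (b * q)"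
proof -
  have "[x + (m - 1) * w = a + (m - 1) * a] (mod b)"
    using assms(1,5,6) by (intro cong_add cong_mult) (simp_all add: cong_def)
  moreover have "a + (m - 1) * a = m * a" using assms(3) by (cases m) auto
  ultimately have "[x + (m - 1) * w = a] (mod b)" using assms(4) cong_trans by metis
  then have "(x + (m - 1) * w) mod b = a" using assms(1) by (simp add: cong_def)
  then show ?thesis using assms(1,2) by (simp add: F_add_def sum_list_replicate F_red_eq_mod)
qed

lemma F_mult_replicate:
  assumes "a < b" "0 < q" "1 \<le> n" "[a ^ n = a] (mod b)" "u mod b = a" "w mod b = a"
  shows "F_mult a b q (u # replicate (n - 1) w) = (u * w ^ (n - 1)) mod (b * q)"
proof -
  have "[u * w ^ (n - 1) = a * a ^ (n - 1)] (mod b)"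
    using assms(1,5,6) by (intro cong_mult cong_pow) (simp_all add: cong_def)
  moreover have "a * a ^ (n - 1) = a ^ n" using assms(3) by (cases n) auto
  ultimately have "[u * w ^ (n - 1) = a] (mod b)" using assms(4) cong_trans by metis
  then have "(u * w ^ (n - 1)) mod b = a" using assms(1) by (simp add: cong_def)
  then show ?thesis using assms(1,2) by (simp add: F_mult_def F_red_eq_mod)
qed

lemma F_carrier_translate:
  assumes "a < b" "x \<in> F_carrier a b q"
  shows "(x + b * t) mod (b * q) \<in> F_carrier a b q"
proof -
  have "x < b * q" using assms by (simp add: F_carrier_iff)
  then have "0 < b * q" by (metis gr0I mult_is_0 not_less0)
  moreover have "(x + b * t) mod (b * q) mod b = a"
    using assms by (simp add: F_carrier_iff mod_mod_cancel)
  ultimately show ?thesis using assms(1) by (simp add: F_carrier_iff)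
qed

lemma F_carrier_translate_neq:
  assumes "a < b" "x \<in> F_carrier a b q" "0 < t" "t < q"
  shows "(x + b * t) mod (b * q) \<noteq> x"
proof
  assume "(x + b * t) mod (b * q) = x"
  then have "[x + b * t = x] (mod (b * q))" using assms by (simp add: cong_def F_carrier_iff)
  then have "b * q dvd b * t" by (simp add: cong_add_lcancel_0_nat cong_0_iff)
  then have "q dvd t" using assms(1) by simp
  then show False using assms(3,4) by (simp add: nat_dvd_not_less)
qed

lemma minimal_add_arity_eq:
  fixes a b m :: nat
  assumes "0 < b" "2 \<le> m" "[m * a = a] (mod b)"
    and minimal: "\<forall>m'. 2 \<le> m' \<and> m' < m \<longrightarrow> \<not> [m' * a = a] (mod b)"
  shows "(m - 1) * gcd a b = b"
proof -
  define h where "h = gcd a b"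
  define a' b' where "a' = a div h" and "b' = b div h"
  have h: "0 < h" "a = a' * h" "b = b' * h" using assms(1) by (simp_all add: h_def a'_def b'_def)
  have "coprime a' b'" using div_gcd_coprime[of a b] assms(1) by (simp add: a'_def b'_def h_def)
  have "a \<le> m * a" using assms(2) by simp
  then have "b dvd (m - 1) * a"
    using assms(3) cong_altdef_nat[of a "m * a" b] by (simp add: diff_mult_distrib)
  then have "b' dvd (m - 1) * a'" using h by (simp add: mult.assoc)
  then have "b' dvd m - 1"
    using \<open>coprime a' b'\<close> by (simp add: coprime_commute coprime_dvd_mult_left_iff)
  then have upper: "b' \<le> m - 1" using assms(2) by (intro dvd_imp_le) auto
  have "0 < b'" using h assms(1) by (cases b') auto
  have "[(b' + 1) * a = a] (mod b)" using h by (simp add: cong_def algebra_simps)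
  then have "\<not> b' + 1 < m" using minimal[rule_format, of "b' + 1"] \<open>0 < b'\<close> by linarith
  then have "m - 1 = b'" using upper by linarith
  then show ?thesis using h(3)[symmetric] by (simp add: h_def)
qed

definition translation_stable :: "nat \<Rightarrow> nat set \<Rightarrow> nat \<Rightarrow> bool" where
  "translation_stable N S d \<longleftrightarrow> (\<forall>x\<in>S. (x + d) mod N \<in> S)"

lemma translation_stable_add:
  assumes "translation_stable N S d" "translation_stable N S e"
  shows "translation_stable N S (d + e)"
  using assms unfolding translation_stable_def by (metis mod_add_left_eq add.assoc)

lemma translation_stable_mult:
  assumes "translation_stable N S d" "\<forall>x\<in>S. x < N"
  shows "translation_stable N S (k * d)"
proof (induction k)
  case 0
  then show ?case using assms(2) by (simp add: translation_stable_def)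
next
  case (Suc k)
  then show ?case using translation_stable_add[OF assms(1) Suc.IH] by simp
qed

lemma translation_stable_cong:
  assumes "translation_stable N S d" "[d = e] (mod N)"
  shows "translation_stable N S e"
  using assms unfolding translation_stable_def cong_def by (metis mod_add_right_eq)

lemma translation_stable_gcd:
  assumes "translation_stable N S d" "\<forall>x\<in>S. x < N"
  shows "translation_stable N S (gcd d N)"
proof -
  obtain k where "[k * d = gcd d N] (mod N)"
  proof (cases "d = 0")
    case True
    then show ?thesis using that[of 0] by (simp add: cong_def)
  next
    case False
    then obtain x y where "d * x = N * y + gcd d N" using bezout_nat by blast
    then show ?thesis using that[of x] by (simp add: cong_def mult.commute)
  qed
  then show ?thesis using translation_stable_cong translation_stable_mult assms by blast
qed

lemma translation_stable_F_carrier: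
  assumes "a < b" "S \<subseteq> F_carrier a b q" "S \<noteq> {}" "translation_stable (b * q) S d" "d dvd b"
  shows "S = F_carrier a b q"
proof
  have bound: "\<forall>x\<in>S. x < b * q" using assms(1,2) F_carrier_iff by blast
  obtain c where "b = c * d" using assms(5) by (metis dvdE mult.commute)
  then have stable: "translation_stable (b * q) S (k * b)" for k
    using translation_stable_mult[OF assms(4) bound, of "k * c"] by (simp add: mult.assoc)
  obtain w where "w \<in> S" using assms(3) by blast
  then obtain kw where kw: "kw < q" "w = a + b * kw" using assms(2) unfolding F_carrier_def by auto
  show "F_carrier a b q \<subseteq> S"
  proof
    fix f assume f: "f \<in> F_carrier a b q"
    then obtain kf where kf: "f = a + b * kf" unfolding F_carrier_def by auto
    have "(w + (q - kw + kf) * b) mod (b * q) \<in> S"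
      using stable \<open>w \<in> S\<close> unfolding translation_stable_def by blast
    moreover have "w + (q - kw + kf) * b = f + b * q"
    proof -
      obtain r where "q = kw + r" using less_imp_add_positive[OF kw(1)] by blast
      then show ?thesis using kw kf by (simp add: algebra_simps)
    qed
    ultimately show "f \<in> S" using f assms(1) by (simp add: F_carrier_iff)
  qed
qed (use assms(2) in simp)

lemma proper_subset_F_carrier_three_le:
  assumes "0 < b" "S \<subset> F_carrier a b q" "x \<in> S" "y \<in> S" "x \<noteq> y"
  shows "3 \<le> q"
proof -
  have "finite (F_carrier a b q)" by (simp add: F_carrier_def)
  then have "card S < card (F_carrier a b q)" using assms(2) by (rule psubset_card_mono)
  then have "card S < q" using card_F_carrier assms(1) by simp
  moreover have "finite S"
    using assms(2) \<open>finite (F_carrier a b q)\<close> by (meson finite_subset psubset_imp_subset)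
  then have "card {x, y} \<le> card S" using assms(3,4) by (intro card_mono) auto
  ultimately show ?thesis using assms(5) by simp
qed

lemma nary_group_cancel_head:
  assumes "nary_group T n f" "0 < n" "length xs = n - 1" "set xs \<subseteq> T"
    and "u \<in> T" "v \<in> T" "f (u # xs) = f (v # xs)"
  shows "u = v"
proof -
  have "f (u # xs) \<in> T" using assms unfolding nary_group_def closed_on_def by auto
  then have "\<exists>!x. x \<in> T \<and> f (x # xs) = f (u # xs)"
    using assms unfolding nary_group_def by (metis append_Nil drop_0 take_0)
  then show ?thesis using assms(5-7) by metis
qed

lemma polyadic_field_not_singleton: "\<not> polyadic_field {z} m n nu mu"
proof
  assume field: "polyadic_field {z} m n nu mu"
  have "is_zero {z} n mu z"
    unfolding is_zero_def
  proof (intro conjI allI impI)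
    fix i xs assume "i < n \<and> length xs = n - 1 \<and> set xs \<subseteq> {z}"
    then have "length (take i xs @ z # drop i xs) = n \<and> set (take i xs @ z # drop i xs) \<subseteq> {z}"
      by (auto dest: in_set_takeD in_set_dropD)
    then show "mu (take i xs @ z # drop i xs) = z"
      using field unfolding polyadic_field_def closed_on_def by blast
  qed simp
  then have "nary_group {} n mu" using field unfolding polyadic_field_def by (auto split: if_splits)
  then show False by (simp add: nary_group_def)
qed

lemma polyadic_field_mult_group:
  assumes "polyadic_field S m n nu mu"
  obtains z T where "z \<in> S" "nary_group T n mu" "S - {z} \<subseteq> T" "T \<subseteq> S"
proof (cases "\<exists>z. is_zero S n mu z")
  case True
  then obtain z where z: "is_zero S n mu z" by blast
  then have "nary_group (S - {z}) n mu" using assms True unfolding polyadic_field_def by auto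
  then show ?thesis using z that[of z "S - {z}"] unfolding is_zero_def by auto
next
  case False
  then have "nary_group S n mu" using assms unfolding polyadic_field_def by auto
  then show ?thesis using that[of _ S] unfolding nary_group_def by blast
qed

lemma F_add_translation_stable:
  assumes "a < b" "0 < q" "1 \<le> m" "[m * a = a] (mod b)"
    and "S \<subseteq> F_carrier a b q" "closed_on S m (F_add a b q)" "w \<in> S"
  shows "translation_stable (b * q) S ((m - 1) * w)"
  unfolding translation_stable_def
proof
  fix x assume "x \<in> S"
  then have "length (x # replicate (m - 1) w) = m \<and> set (x # replicate (m - 1) w) \<subseteq> S"
    using assms(3,7) by auto
  then have "F_add a b q (x # replicate (m - 1) w) \<in> S"
    using assms(6) unfolding closed_on_def by blast
  moreover have "x mod b = a" "w mod b = a"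
    using assms(1,5,7) \<open>x \<in> S\<close> by (auto simp: F_carrier_iff)
  ultimately show "(x + (m - 1) * w) mod (b * q) \<in> S"
    using F_add_replicate[OF assms(1-4)] by simp
qed

lemma gcd_translation_factor:
  fixes a b m q w :: nat
  assumes "0 < b" "0 < q" "(m - 1) * gcd a b = b" "w mod b = a"
    and "\<not> gcd ((m - 1) * w) (b * q) dvd b"
  obtains g where "2 \<le> g" "g dvd q" "g dvd w"
proof -
  have "b dvd (m - 1) * a"
    using assms(3) by (metis dvd_mult_div_cancel gcd_dvd1 mult.assoc dvd_triv_left)
  moreover have "a < b" using assms(1,4) by auto
  then have "[(m - 1) * w = (m - 1) * a] (mod b)"
    using assms(4) by (intro cong_mult) (simp_all add: cong_def)
  ultimately have "b dvd (m - 1) * w" using cong_dvd_iff by blast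
  then obtain g where g: "gcd ((m - 1) * w) (b * q) = b * g" by (meson dvd_triv_left gcd_greatest dvdE)
  have "gcd ((m - 1) * w) (b * q) \<noteq> 0" using assms(1,2) by simp
  then have "g \<noteq> 0" using g by (metis mult_0_right)
  moreover have "g \<noteq> 1" using g assms(5) by auto
  moreover have "b * g dvd b * q" using g by (metis gcd_dvd2)
  then have "g dvd q" using assms(1) by simp
  moreover have "g dvd w"
  proof -
    obtain h where h: "b = (m - 1) * h" using assms(3) by metis
    have "b * g dvd (m - 1) * w" using g by (metis gcd_dvd1)
    then have "(m - 1) * (h * g) dvd (m - 1) * w" using h by (simp add: mult.assoc)
    moreover have "m - 1 \<noteq> 0" using h assms(1) by auto
    ultimately show ?thesis by (simp add: dvd_mult_right)
  qed
  ultimately show ?thesis using that[of g] by linarith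
qed

lemma F_mult_translate_eq:
  assumes "a < b" "2 \<le> n" "[a ^ n = a] (mod b)"
    and "u \<in> F_carrier a b q" "w \<in> F_carrier a b q" "g dvd w" "q = g * s"
  shows "F_mult a b q (((u + b * s) mod (b * q)) # replicate (n - 1) w)
       = F_mult a b q (u # replicate (n - 1) w)"
proof -
  have "u < b * q" using assms(1,4) by (simp add: F_carrier_iff)
  then have "0 < q" by (metis gr0I mult_0_right not_less0)
  have mem: "(u + b * s) mod (b * q) \<in> F_carrier a b q"
    using assms(1,4) by (rule F_carrier_translate)
  have "w dvd w ^ (n - 1)" using assms(2) by (intro dvd_power) auto
  then obtain r where r: "w ^ (n - 1) = g * r" using assms(6) by (meson dvd_trans dvdE)
  have "[(u + b * s) mod (b * q) * w ^ (n - 1) = (u + b * s) * w ^ (n - 1)] (mod (b * q))"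
    by (intro cong_mult) (simp_all add: cong_def)
  also have "(u + b * s) * w ^ (n - 1) = u * w ^ (n - 1) + (b * q) * r"
    using r assms(7) by (simp add: algebra_simps)
  also have "[\<dots> = u * w ^ (n - 1)] (mod (b * q))" by (simp add: cong_def)
  finally show ?thesis
    using F_mult_replicate[OF assms(1) \<open>0 < q\<close> _ assms(3)] assms(1,2,4,5) mem
    by (simp add: F_carrier_iff cong_def)
qed

lemma not_nary_group_F_mult_divisor:
  assumes "a < b" "2 \<le> n" "[a ^ n = a] (mod b)" "3 \<le> q"
    and "z \<in> F_carrier a b q" "F_carrier a b q - {z} \<subseteq> T" "T \<subseteq> F_carrier a b q"
    and "w \<in> T" "2 \<le> g" "g dvd q" "g dvd w"
  shows "\<not> nary_group T n (F_mult a b q)"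
proof
  assume group: "nary_group T n (F_mult a b q)"
  obtain s where s: "q = g * s" using assms(10) by blast
  have "0 < s" using s assms(4) by (cases s) auto
  have "s + 1 < q"
  proof (cases "s = 1")
    case True
    then show ?thesis using s assms(4) by simp
  next
    case False
    then have "s + 1 < 2 * s" using \<open>0 < s\<close> by linarith
    also have "2 * s \<le> q" using s assms(9) by simp
    finally show ?thesis .
  qed
  define u where "u = (z + b * 1) mod (b * q)"
  define u' where "u' = (u + b * s) mod (b * q)"
  have "u' = (z + b * (1 + s)) mod (b * q)"
    unfolding u'_def u_def by (simp add: mod_add_left_eq add.assoc distrib_left)
  then have u': "u' \<in> F_carrier a b q" "u' \<noteq> z"
    using F_carrier_translate[OF assms(1,5), of "1 + s"]
      F_carrier_translate_neq[OF assms(1,5), of "1 + s"] \<open>s + 1 < q\<close>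
    by simp_all
  have u: "u \<in> F_carrier a b q" "u \<noteq> z"
    unfolding u_def
    using F_carrier_translate[OF assms(1,5), of 1] F_carrier_translate_neq[OF assms(1,5), of 1]
      assms(4)
    by simp_all
  have "u' \<noteq> u"
    unfolding u'_def using F_carrier_translate_neq[OF assms(1) u(1) \<open>0 < s\<close>] \<open>s + 1 < q\<close> by simp
  moreover have "u' = u"
  proof (rule nary_group_cancel_head[OF group])
    show "F_mult a b q (u' # replicate (n - 1) w) = F_mult a b q (u # replicate (n - 1) w)"
      unfolding u'_def using F_mult_translate_eq[OF assms(1-3) u(1) _ assms(11) s] assms(7,8) by blast
  qed (use u u' assms(2,6,8) in \<open>auto simp: set_replicate_conv_if\<close>)
  ultimately show False by simp
qed

theorem mainTheorem4:
  fixes a b m n q :: nat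
  assumes "1 \<le> b" and "a < b" and "1 \<le> q"
    and "2 \<le> m" and "[m * a = a] (mod b)"
    and "\<forall>m'. 2 \<le> m' \<and> m' < m \<longrightarrow> \<not> [m' * a = a] (mod b)"
    and "2 \<le> n" and "[a ^ n = a] (mod b)"
    and "\<forall>n'. 2 \<le> n' \<and> n' < n \<longrightarrow> \<not> [a ^ n' = a] (mod b)"
    and "polyadic_field (F_carrier a b q) m n (F_add a b q) (F_mult a b q)"
  shows "\<not> (\<exists>S. S \<subset> F_carrier a b q \<and> S \<noteq> {} \<and>
              closed_on S m (F_add a b q) \<and> closed_on S n (F_mult a b q) \<and>
              polyadic_field S m n (F_add a b q) (F_mult a b q))"
  \<comment> \<open>Only a ^ n \<equiv> a (mod b) is used.\<close>
proof
  assume "\<exists>S. S \<subset> F_carrier a b q \<and> S \<noteq> {} \<and>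
              closed_on S m (F_add a b q) \<and> closed_on S n (F_mult a b q) \<and>
              polyadic_field S m n (F_add a b q) (F_mult a b q)"
  then obtain S where S: "S \<subset> F_carrier a b q" "S \<noteq> {}" "closed_on S m (F_add a b q)"
    and S_field: "polyadic_field S m n (F_add a b q) (F_mult a b q)" by blast
  obtain z T where zT: "z \<in> F_carrier a b q" "nary_group T n (F_mult a b q)"
    "F_carrier a b q - {z} \<subseteq> T" "T \<subseteq> F_carrier a b q"
    using polyadic_field_mult_group[OF assms(10)] by blast
  have two: "\<exists>y\<in>S. y \<noteq> x" for x
    using S(2) polyadic_field_not_singleton[of x] S_field by (metis insertI1 subset_singletonD subsetI)
  then obtain w where w: "w \<in> S" "w \<noteq> z" by blast
  obtain y where y: "y \<in> S" "y \<noteq> w" using two by blast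
  have S_bound: "\<forall>x\<in>S. x < b * q" and w_mod: "w mod b = a"
    using S(1) w(1) assms(2) F_carrier_iff by blast+
  let ?G = "gcd ((m - 1) * w) (b * q)"
  have "translation_stable (b * q) S ?G"
    using F_add_translation_stable[OF assms(2) _ _ assms(5)] S(1,3) w(1) assms(3,4) S_bound
    by (intro translation_stable_gcd) auto
  then have "\<not> ?G dvd b" using translation_stable_F_carrier[OF assms(2) _ S(2)] S(1) by blast
  moreover have "(m - 1) * gcd a b = b"
    using minimal_add_arity_eq[OF _ assms(4,5,6)] assms(1) by simp
  ultimately obtain g where "2 \<le> g" "g dvd q" "g dvd w"
    using gcd_translation_factor[of b q m a w] assms(1,3) w_mod by auto
  moreover have "3 \<le> q"
    using proper_subset_F_carrier_three_le[OF _ S(1) w(1) y(1) y(2)[symmetric]] assms(1) by simp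
  moreover have "w \<in> T" using zT(3) w S(1) by blast
  ultimately show False
    using not_nary_group_F_mult_divisor[OF assms(2,7,8) _ zT(1,3,4)] zT(2) by blast
qed

end
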